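(* Let $\epsilon>0$ and let $D$ be a properly totally coloured digraph on at least $2\epsilon^{-2}$ vertices with rainbow vertex set. Let $v\in V(D)$ and let $\delta^+=\min\{d^+(x): d^{\mathrm{rb}}(v,x)\leq\epsilon^{-1}\}$. Then there is a set $N\subseteq V(D)$ such that $d^{\mathrm{rb}}(v,u)\leq\epsilon^{-1}$ for every $u\in N$ and $\delta^+(D[N])\geq\delta^+-2\epsilon|D|$.
   Context: Digraphs are finite, without loops and without multiple edges (an edge may appear in both directions). A path is a sequence of distinct vertices with consecutive vertices joined by directed edges; its length is its number of edges. A total colouring assigns colours to vertices and edges; it is proper if outgoing edges at any vertex have distinct colours, ingoing edges at any vertex have distinct colours, adjacent vertices have distinct colours, and every edge has a colour different from both its endpoints. $D$ has rainbow vertex set if all vertices have distinct colours. A path is rainbow if all its vertices and edges have pairwise distinct colours. $d^{\mathrm{rb}}(u,x)$ is the length of a shortest rainbow path from $u$ to $x$. $d^+(x)$ is the out-degree of $x$, $D[N]$ the induced subdigraph, $\delta^+$ the minimum out-degree, $|D|$ the number of vertices. *)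

theory Defs
  imports Main "HOL-Library.Extended_Nat"
begin

definition digraph :: "'a set \<Rightarrow> ('a \<times> 'a) set \<Rightarrow> bool" where
  "digraph V E \<longleftrightarrow> finite V \<and> E \<subseteq> V \<times> V \<and> (\<forall>x. (x, x) \<notin> E)"

definition proper_total_colouring ::
  "'a set \<Rightarrow> ('a \<times> 'a) set \<Rightarrow> ('a \<Rightarrow> 'c) \<Rightarrow> ('a \<times> 'a \<Rightarrow> 'c) \<Rightarrow> bool" where
  "proper_total_colouring V E cv ce \<longleftrightarrow>
     (\<forall>x y z. (x, y) \<in> E \<and> (x, z) \<in> E \<and> y \<noteq> z \<longrightarrow> ce (x, y) \<noteq> ce (x, z)) \<and>
     (\<forall>x y z. (y, x) \<in> E \<and> (z, x) \<in> E \<and> y \<noteq> z \<longrightarrow> ce (y, x) \<noteq> ce (z, x)) \<and>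
     (\<forall>x y. (x, y) \<in> E \<longrightarrow> cv x \<noteq> cv y) \<and>
     (\<forall>x y. (x, y) \<in> E \<longrightarrow> ce (x, y) \<noteq> cv x \<and> ce (x, y) \<noteq> cv y)"

definition rainbow_vertex_set :: "'a set \<Rightarrow> ('a \<Rightarrow> 'c) \<Rightarrow> bool" where
  "rainbow_vertex_set V cv \<longleftrightarrow> inj_on cv V"

definition is_path :: "'a set \<Rightarrow> ('a \<times> 'a) set \<Rightarrow> 'a list \<Rightarrow> 'a \<Rightarrow> 'a \<Rightarrow> bool" where
  "is_path V E p u x \<longleftrightarrow> p \<noteq> [] \<and> distinct p \<and> set p \<subseteq> V \<and> hd p = u \<and> last p = x \<and>
     (\<forall>i. Suc i < length p \<longrightarrow> (p ! i, p ! Suc i) \<in> E)"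

definition path_edges :: "'a list \<Rightarrow> ('a \<times> 'a) list" where
  "path_edges p = zip p (tl p)"

definition path_length :: "'a list \<Rightarrow> nat" where
  "path_length p = length p - 1"

definition rainbow_path :: "('a \<Rightarrow> 'c) \<Rightarrow> ('a \<times> 'a \<Rightarrow> 'c) \<Rightarrow> 'a list \<Rightarrow> bool" where
  "rainbow_path cv ce p \<longleftrightarrow> distinct (map cv p @ map ce (path_edges p))"

text \<open>Rainbow distance: length of a shortest rainbow path (\<infinity> if none).\<close>
definition rb_dist ::
  "'a set \<Rightarrow> ('a \<times> 'a) set \<Rightarrow> ('a \<Rightarrow> 'c) \<Rightarrow> ('a \<times> 'a \<Rightarrow> 'c) \<Rightarrow> 'a \<Rightarrow> 'a \<Rightarrow> enat" where
  "rb_dist V E cv ce u x =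
     Inf {enat (path_length p) | p. is_path V E p u x \<and> rainbow_path cv ce p}"

definition rb_dist_le ::
  "'a set \<Rightarrow> ('a \<times> 'a) set \<Rightarrow> ('a \<Rightarrow> 'c) \<Rightarrow> ('a \<times> 'a \<Rightarrow> 'c) \<Rightarrow> 'a \<Rightarrow> 'a \<Rightarrow> real \<Rightarrow> bool" where
  "rb_dist_le V E cv ce u x r \<longleftrightarrow> (\<exists>n. rb_dist V E cv ce u x = enat n \<and> real n \<le> r)"

definition out_degree :: "('a \<times> 'a) set \<Rightarrow> 'a \<Rightarrow> nat" where
  "out_degree E x = card {y. (x, y) \<in> E}"

text \<open>Minimum out-degree of the induced subdigraph D[N] (for nonempty N).\<close>
definition min_out_degree_induced :: "('a \<times> 'a) set \<Rightarrow> 'a set \<Rightarrow> nat" where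
  "min_out_degree_induced E N = Min ((\<lambda>x. card {y \<in> N. (x, y) \<in> E}) ` N)"

end

theory Submission
  imports Defs
begin

text \<open>Let \<open>B\<^sub>j\<close> be the set of vertices at rainbow distance at most \<open>j\<close> from \<open>v\<close>, and let
  \<open>x \<in> B\<^sub>i\<close> be reached by a rainbow path \<open>P\<close> of length at most \<open>i\<close>. An out-neighbour \<open>y\<close> of \<open>x\<close>
  lying neither on \<open>P\<close> nor in \<open>B\<^sub>i\<^sub>+\<^sub>1\<close> cannot extend \<open>P\<close> to a rainbow path, so its colour is an
  edge colour of \<open>P\<close>, or the colour of \<open>xy\<close> is a vertex or edge colour of \<open>P\<close>. As the vertex colours
  are distinct and the out-edges at \<open>x\<close> have distinct colours, each of these clashes excludes at
  most \<open>i\<close> out-neighbours; hence every vertex of \<open>B\<^sub>i\<close> has at least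
  \<open>\<delta>\<^sup>+ - |B\<^sub>i\<^sub>+\<^sub>1 - B\<^sub>i| - 3i\<close> out-neighbours inside \<open>B\<^sub>i\<close>. The layers \<open>B\<^sub>i\<^sub>+\<^sub>1 - B\<^sub>i\<close>,
  \<open>i \<le> \<lfloor>1/\<epsilon>\<rfloor>\<close>, are disjoint, so averaging (with \<open>|D| \<ge> 2\<epsilon>\<^sup>-\<^sup>2\<close> absorbing \<open>\<Sum> 3i\<close>) yields
  such an \<open>i\<close> with \<open>|B\<^sub>i\<^sub>+\<^sub>1 - B\<^sub>i| + 3i \<le> 2\<epsilon>|D|\<close>, and \<open>N = B\<^sub>i\<close> works.\<close>

lemma card_le_length_if_inj_on_into_set:
  assumes "inj_on f A" "f ` A \<subseteq> set xs"
  shows "card A \<le> length xs"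
proof -
  have "card A = card (f ` A)" using assms(1) by (rule card_image[symmetric])
  also have "\<dots> \<le> card (set xs)" using assms(2) by (rule card_mono[OF finite_set])
  also have "\<dots> \<le> length xs" by (rule card_length)
  finally show ?thesis .
qed

lemma card_chain_eq_sum_layers:
  assumes "\<And>i. B i \<subseteq> B (Suc i)" "\<And>i. finite (B i)"
  shows "card (B (Suc K)) = card (B 0) + (\<Sum>i = 0..K. card (B (Suc i) - B i))"
proof -
  have "card (B (Suc j)) = card (B j) + card (B (Suc j) - B j)" for j
    using card_Diff_subset[OF assms(2) assms(1)] card_mono[OF assms(2) assms(1)] by simp
  then show ?thesis by (induction K) simp_all
qed

lemma exists_thin_layer:
  fixes \<epsilon> n :: real and d :: "nat \<Rightarrow> nat"
  assumes "\<epsilon> > 0" "2 / \<epsilon>^2 \<le> n"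
    and "real K \<le> 1 / \<epsilon>" "1 / \<epsilon> < real K + 1"
    and "(\<Sum>i = 0..K. real (d i)) \<le> n - 1"
  shows "\<exists>i \<le> K. real (d i) + 3 * real i \<le> 2 * \<epsilon> * n"
proof (rule ccontr)
  assume "\<not> ?thesis"
  then have "(\<Sum>i = 0..K. 2 * \<epsilon> * n) < (\<Sum>i = 0..K. real (d i) + 3 * real i)"
    by (intro sum_strict_mono) auto
  also have "\<dots> = (\<Sum>i = 0..K. real (d i)) + 3 / 2 * (2 * (\<Sum>i = 0..K. real i))"
    by (simp add: sum.distrib sum_distrib_left)
  also have "\<dots> \<le> n - 1 + 3 / 2 * (real K * (real K + 1))"
    using assms(5) by (simp only: double_gauss_sum)
  also have "\<dots> \<le> 2 * n"
  proof -
    have "0 \<le> (real K - 1) * (real K - 2)"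
    proof (cases "K \<le> 2")
      case True
      then have "K = 0 \<or> K = 1 \<or> K = 2" by auto
      then show ?thesis by auto
    next
      case False
      then show ?thesis by (intro mult_nonneg_nonneg) auto
    qed
    then have "3 * real K \<le> real K * real K + 2" by (simp add: algebra_simps)
    moreover have "2 * (real K * real K) \<le> n"
    proof -
      have "real K * \<epsilon> \<le> 1" using assms(1,3) by (simp add: field_simps)
      then have "(real K * \<epsilon>)^2 \<le> 1"
        using assms(1) by (simp add: power_le_one)
      then have "2 * (real K * real K) * \<epsilon>^2 \<le> 2"
        by (simp add: power2_eq_square algebra_simps)
      also have "\<dots> \<le> n * \<epsilon>^2" using assms(1,2) by (simp add: field_simps)
      finally show ?thesis using assms(1) by simp
    qed
    ultimately show ?thesis by (simp add: algebra_simps)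
  qed
  finally have "(real K + 1) * \<epsilon> * n < n" by (simp add: algebra_simps)
  moreover have "n > 0" using assms(1,2) by (smt (verit) divide_pos_pos zero_less_power)
  moreover have "1 < (real K + 1) * \<epsilon>" using assms(1,4) by (simp add: field_simps)
  ultimately show False using mult_strict_right_mono[of 1 "(real K + 1) * \<epsilon>" n] by simp
qed

lemma length_path_edges: "length (path_edges p) = path_length p"
  unfolding path_edges_def path_length_def by simp

lemma path_edges_take: "path_edges (take m p) = take (m - 1) (path_edges p)"
  unfolding path_edges_def by (rule nth_equalityI) (auto simp: nth_tl)

lemma path_edges_snoc: "p \<noteq> [] \<Longrightarrow> path_edges (p @ [y]) = path_edges p @ [(last p, y)]"
  unfolding path_edges_def by (induction p rule: induct_list012) auto

lemma is_path_take:
  assumes "is_path V E p u x" "j < length p"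
  shows "is_path V E (take (Suc j) p) u (p ! j)"
  using assms unfolding is_path_def
  by (auto simp: hd_take last_conv_nth min_def dest: in_set_takeD)
    (metis One_nat_def diff_Suc_1 le_less_Suc_eq not_less_eq)

lemma rainbow_path_take:
  assumes "rainbow_path cv ce p"
  shows "rainbow_path cv ce (take (Suc j) p)"
proof -
  have "map cv (take (Suc j) p) @ map ce (path_edges (take (Suc j) p))
      = take (Suc j) (map cv p) @ take j (map ce (path_edges p))"
    by (simp add: path_edges_take take_map)
  moreover have "distinct (take (Suc j) (map cv p) @ take j (map ce (path_edges p)))"
    using assms set_take_subset[of "Suc j" "map cv p"] set_take_subset[of j "map ce (path_edges p)"]
    unfolding rainbow_path_def by (simp only: distinct_append distinct_take) blast
  ultimately show ?thesis unfolding rainbow_path_def by simp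
qed

lemma is_path_snoc:
  assumes "is_path V E p u x" "(x, y) \<in> E" "y \<in> V" "y \<notin> set p"
  shows "is_path V E (p @ [y]) u y"
  using assms unfolding is_path_def
  by (auto simp: nth_append) (metis Suc_lessI diff_Suc_1 last_conv_nth length_0_conv less_antisym)

lemma rb_dist_le_path_length:
  assumes "is_path V E p u x" "rainbow_path cv ce p"
  shows "rb_dist V E cv ce u x \<le> enat (path_length p)"
  unfolding rb_dist_def using assms by (auto intro!: Inf_lower)

lemma rb_dist_le_enatE:
  assumes "rb_dist V E cv ce u x \<le> enat i"
  obtains p where "is_path V E p u x" "rainbow_path cv ce p" "path_length p \<le> i"
proof -
  let ?A = "{enat (path_length p) | p. is_path V E p u x \<and> rainbow_path cv ce p}"
  have "?A \<noteq> {}"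
    using assms unfolding rb_dist_def by (auto simp: Inf_enat_def split: if_splits)
  then have "Inf ?A \<in> ?A" unfolding Inf_enat_def by (auto intro: LeastI)
  then show ?thesis using assms that unfolding rb_dist_def by auto
qed

lemma rb_dist_le_of_mem_path:
  assumes "is_path V E p u x" "rainbow_path cv ce p" "y \<in> set p"
  shows "rb_dist V E cv ce u y \<le> enat (path_length p)"
proof -
  obtain j where j: "j < length p" "p ! j = y" using assms(3) by (auto simp: in_set_conv_nth)
  have "rb_dist V E cv ce u y \<le> enat (path_length (take (Suc j) p))"
    using rb_dist_le_path_length[OF is_path_take[OF assms(1) j(1)] rainbow_path_take[OF assms(2)]] j(2)
    by simp
  also have "\<dots> \<le> enat (path_length p)" unfolding path_length_def by simp
  finally show ?thesis .
qed

definition rb_ball ::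
  "'a set \<Rightarrow> ('a \<times> 'a) set \<Rightarrow> ('a \<Rightarrow> 'c) \<Rightarrow> ('a \<times> 'a \<Rightarrow> 'c) \<Rightarrow> 'a \<Rightarrow> nat \<Rightarrow> 'a set" where
  "rb_ball V E cv ce v j = {z \<in> V. rb_dist V E cv ce v z \<le> enat j}"

lemma rb_ball_mono: "i \<le> j \<Longrightarrow> rb_ball V E cv ce v i \<subseteq> rb_ball V E cv ce v j"
  unfolding rb_ball_def by (auto intro: order_trans)

lemma rb_dist_le_if_mem_rb_ball:
  assumes "x \<in> rb_ball V E cv ce v i" "real i \<le> r"
  shows "rb_dist_le V E cv ce v x r"
proof -
  obtain m where "rb_dist V E cv ce v x = enat m" "m \<le> i"
    using assms(1) unfolding rb_ball_def by (metis enat_ile enat_ord_simps(1) mem_Collect_eq)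
  then show ?thesis using assms(2) unfolding rb_dist_le_def by force
qed

lemma center_mem_rb_ball:
  assumes "v \<in> V"
  shows "v \<in> rb_ball V E cv ce v i"
proof -
  have "rb_dist V E cv ce v v \<le> enat (path_length [v])"
    by (rule rb_dist_le_path_length) (use assms in \<open>auto simp: is_path_def rainbow_path_def path_edges_def\<close>)
  also have "\<dots> \<le> enat i" by (simp add: path_length_def)
  finally show ?thesis using assms unfolding rb_ball_def by simp
qed

locale properly_coloured_digraph =
  fixes V :: "'a set" and E :: "('a \<times> 'a) set" and cv :: "'a \<Rightarrow> 'c" and ce :: "'a \<times> 'a \<Rightarrow> 'c"
  assumes digraph: "digraph V E"
    and proper: "proper_total_colouring V E cv ce"
    and rainbow_vertices: "rainbow_vertex_set V cv"
begin

lemma finite_vertices: "finite V"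
  using digraph unfolding digraph_def by simp

lemma edge_in_vertices: "(x, y) \<in> E \<Longrightarrow> x \<in> V \<and> y \<in> V"
  using digraph unfolding digraph_def by auto

lemma inj_on_out_edge_colours: "inj_on (\<lambda>y. ce (x, y)) {y. (x, y) \<in> E}"
  using proper unfolding proper_total_colouring_def inj_on_def by blast

lemma rainbow_path_snoc:
  assumes "is_path V E p u x" "rainbow_path cv ce p" "(x, y) \<in> E" "y \<notin> set p"
    and "cv y \<notin> ce ` set (path_edges p)"
    and "ce (x, y) \<notin> cv ` set (butlast p)"
    and "ce (x, y) \<notin> ce ` set (path_edges p)"
  shows "rainbow_path cv ce (p @ [y])"
proof -
  have p: "p \<noteq> []" "last p = x" "set p \<subseteq> V" using assms(1) unfolding is_path_def by auto
  have "set p = insert x (set (butlast p))"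
    using p by (metis append_butlast_last_id list.simps(15) rotate1.simps(2) set_rotate1)
  moreover have "ce (x, y) \<noteq> cv x" "ce (x, y) \<noteq> cv y"
    using proper assms(3) unfolding proper_total_colouring_def by auto
  moreover have "cv y \<notin> cv ` set p"
    using rainbow_vertices p(3) assms(4) edge_in_vertices[OF assms(3)]
    unfolding rainbow_vertex_set_def inj_on_def by blast
  ultimately show ?thesis
    using assms(2,5-7) unfolding rainbow_path_def path_edges_snoc[OF p(1)] p(2)
    by (auto simp: distinct_append)
qed

lemma out_degree_le_rb_ball:
  assumes "x \<in> rb_ball V E cv ce v i"
  shows "out_degree E x \<le> card {y \<in> rb_ball V E cv ce v i. (x, y) \<in> E}
           + card (rb_ball V E cv ce v (Suc i) - rb_ball V E cv ce v i) + 3 * i"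
proof -
  let ?B = "rb_ball V E cv ce v"
  obtain p where p: "is_path V E p v x" "rainbow_path cv ce p" "path_length p \<le> i"
    using assms unfolding rb_ball_def by (auto elim: rb_dist_le_enatE)
  define out where "out = {y. (x, y) \<in> E}"
  define S\<^sub>1 where "S\<^sub>1 = {y \<in> out. cv y \<in> ce ` set (path_edges p)}"
  define S\<^sub>2 where "S\<^sub>2 = {y \<in> out. ce (x, y) \<in> cv ` set (butlast p)}"
  define S\<^sub>3 where "S\<^sub>3 = {y \<in> out. ce (x, y) \<in> ce ` set (path_edges p)}"
  have out_V: "out \<subseteq> V" unfolding out_def using edge_in_vertices by auto
  have "card S\<^sub>1 \<le> length (map ce (path_edges p))"
    using rainbow_vertices out_V unfolding rainbow_vertex_set_def S\<^sub>1_def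
    by (intro card_le_length_if_inj_on_into_set[of cv]) (auto intro: inj_on_subset)
  moreover have "card S\<^sub>2 \<le> length (map cv (butlast p))"
    using inj_on_out_edge_colours unfolding S\<^sub>2_def out_def
    by (intro card_le_length_if_inj_on_into_set[of "\<lambda>y. ce (x, y)"]) (auto intro: inj_on_subset)
  moreover have "card S\<^sub>3 \<le> length (map ce (path_edges p))"
    using inj_on_out_edge_colours unfolding S\<^sub>3_def out_def
    by (intro card_le_length_if_inj_on_into_set[of "\<lambda>y. ce (x, y)"]) (auto intro: inj_on_subset)
  ultimately have clashes: "card S\<^sub>1 + card S\<^sub>2 + card S\<^sub>3 \<le> 3 * i"
    using p(3) by (simp add: length_path_edges path_length_def)
  have cover: "out \<subseteq> {y \<in> ?B i. (x, y) \<in> E} \<union> (?B (Suc i) - ?B i) \<union> S\<^sub>1 \<union> S\<^sub>2 \<union> S\<^sub>3"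
  proof
    fix y assume y: "y \<in> out"
    then have e: "(x, y) \<in> E" and "y \<in> V" using out_V unfolding out_def by auto
    consider "y \<in> set p" | "y \<in> S\<^sub>1 \<union> S\<^sub>2 \<union> S\<^sub>3" | "y \<notin> set p" "y \<notin> S\<^sub>1 \<union> S\<^sub>2 \<union> S\<^sub>3" by blast
    then show "y \<in> {y \<in> ?B i. (x, y) \<in> E} \<union> (?B (Suc i) - ?B i) \<union> S\<^sub>1 \<union> S\<^sub>2 \<union> S\<^sub>3"
    proof cases
      case 1
      then have "rb_dist V E cv ce v y \<le> enat i"
        using rb_dist_le_of_mem_path[OF p(1,2)] p(3) order.trans enat_ord_simps(1) by blast
      then show ?thesis using e \<open>y \<in> V\<close> unfolding rb_ball_def by simp
    next
      case 3
      then have "is_path V E (p @ [y]) v y" "rainbow_path cv ce (p @ [y])"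
        using is_path_snoc[OF p(1) e \<open>y \<in> V\<close>] rainbow_path_snoc[OF p(1,2) e] y
        unfolding S\<^sub>1_def S\<^sub>2_def S\<^sub>3_def by auto
      then have "rb_dist V E cv ce v y \<le> enat (path_length (p @ [y]))"
        by (rule rb_dist_le_path_length)
      also have "\<dots> \<le> enat (Suc i)" using p(3) by (simp add: path_length_def)
      finally show ?thesis using e \<open>y \<in> V\<close> unfolding rb_ball_def by auto
    qed blast
  qed
  have "finite ({y \<in> ?B i. (x, y) \<in> E} \<union> (?B (Suc i) - ?B i) \<union> S\<^sub>1 \<union> S\<^sub>2 \<union> S\<^sub>3)"
    using out_V by (intro finite_subset[OF _ finite_vertices]) (auto simp: rb_ball_def S\<^sub>1_def S\<^sub>2_def S\<^sub>3_def)
  then have "card out \<le> card ({y \<in> ?B i. (x, y) \<in> E} \<union> (?B (Suc i) - ?B i) \<union> S\<^sub>1 \<union> S\<^sub>2 \<union> S\<^sub>3)"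
    using cover by (rule card_mono)
  also have "\<dots> \<le> card {y \<in> ?B i. (x, y) \<in> E} + card (?B (Suc i) - ?B i) + card S\<^sub>1 + card S\<^sub>2 + card S\<^sub>3"
    by (meson card_Un_le order_trans add_right_mono)
  finally show ?thesis using clashes unfolding out_degree_def out_def by linarith
qed

lemma exists_thin_rb_layer:
  assumes "\<epsilon> > 0" "2 / \<epsilon>^2 \<le> real (card V)" "v \<in> V"
  obtains i where "real i \<le> 1 / \<epsilon>"
    and "real (card (rb_ball V E cv ce v (Suc i) - rb_ball V E cv ce v i)) + 3 * real i
           \<le> 2 * \<epsilon> * real (card V)"
proof -
  define B where "B = rb_ball V E cv ce v"
  define K where "K = nat \<lfloor>1 / \<epsilon>\<rfloor>"
  have K: "real K \<le> 1 / \<epsilon>" "1 / \<epsilon> < real K + 1"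
    unfolding K_def using assms(1) by (simp_all add: floor_less_iff)
  have B_finite: "finite (B j)" and B_V: "B j \<subseteq> V" for j
    using finite_vertices unfolding B_def rb_ball_def by auto
  have "card (B (Suc K)) = card (B 0) + (\<Sum>i = 0..K. card (B (Suc i) - B i))"
    using B_finite by (intro card_chain_eq_sum_layers) (simp_all add: B_def rb_ball_mono)
  moreover have "card (B (Suc K)) \<le> card V" using B_V finite_vertices by (rule card_mono[rotated])
  moreover have "card (B 0) \<ge> 1"
    using B_finite center_mem_rb_ball[OF assms(3)] unfolding B_def
    by (metis One_nat_def Suc_leI card_gt_0_iff empty_iff)
  ultimately have "real ((\<Sum>i = 0..K. card (B (Suc i) - B i)) + 1) \<le> real (card V)"
    by (intro of_nat_mono) linarith
  then obtain i where "i \<le> K" "real (card (B (Suc i) - B i)) + 3 * real i \<le> 2 * \<epsilon> * real (card V)"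
    using exists_thin_layer[OF assms(1,2) K, of "\<lambda>i. card (B (Suc i) - B i)"] by (auto simp: of_nat_sum)
  moreover from this(1) have "real i \<le> 1 / \<epsilon>" using K(1) of_nat_mono[of i K] by linarith
  ultimately show ?thesis using that unfolding B_def by blast
qed

end

lemma min_out_degree_induced_ge:
  fixes k :: real
  assumes "finite N" "N \<noteq> {}" "\<And>x. x \<in> N \<Longrightarrow> k \<le> real (card {y \<in> N. (x, y) \<in> E})"
  shows "k \<le> real (min_out_degree_induced E N)"
proof -
  have "min_out_degree_induced E N \<in> (\<lambda>x. card {y \<in> N. (x, y) \<in> E}) ` N"
    unfolding min_out_degree_induced_def using assms(1,2) by (intro Min_in) auto
  then show ?thesis using assms(3) by auto
qed

theorem mainTheorem9:
  fixes V :: "'a set" and E :: "('a \<times> 'a) set"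
    and cv :: "'a \<Rightarrow> 'c" and ce :: "'a \<times> 'a \<Rightarrow> 'c"
    and \<epsilon> :: real and v :: 'a
  assumes "\<epsilon> > 0"
    and "digraph V E"
    and "proper_total_colouring V E cv ce"
    and "rainbow_vertex_set V cv"
    and "real (card V) \<ge> 2 / \<epsilon>^2"
    and "v \<in> V"
  shows "\<exists>N \<subseteq> V. N \<noteq> {} \<and> (\<forall>u \<in> N. rb_dist_le V E cv ce v u (1 / \<epsilon>)) \<and>
           real (min_out_degree_induced E N) \<ge>
             real (Min (out_degree E ` {x \<in> V. rb_dist_le V E cv ce v x (1 / \<epsilon>)}))
             - 2 * \<epsilon> * real (card V)"
proof -
  interpret properly_coloured_digraph V E cv ce using assms(2-4) by unfold_locales
  define B where "B = rb_ball V E cv ce v"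
  define \<delta> where "\<delta> = Min (out_degree E ` {x \<in> V. rb_dist_le V E cv ce v x (1 / \<epsilon>)})"
  obtain i where i: "real i \<le> 1 / \<epsilon>"
    "real (card (B (Suc i) - B i)) + 3 * real i \<le> 2 * \<epsilon> * real (card V)"
    using exists_thin_rb_layer[OF assms(1,5,6)] unfolding B_def by blast
  have B_V: "B i \<subseteq> V" and center: "v \<in> B i"
    unfolding B_def using center_mem_rb_ball[OF assms(6)] by (auto simp: rb_ball_def)
  have B_radius: "rb_dist_le V E cv ce v u (1 / \<epsilon>)" if "u \<in> B i" for u
    using that i(1) unfolding B_def by (rule rb_dist_le_if_mem_rb_ball)
  have "real \<delta> - 2 * \<epsilon> * real (card V) \<le> real (min_out_degree_induced E (B i))"
  proof (rule min_out_degree_induced_ge)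
    fix x assume x: "x \<in> B i"
    have "\<delta> \<le> out_degree E x"
      unfolding \<delta>_def using finite_vertices x B_V B_radius by (intro Min_le) auto
    then show "real \<delta> - 2 * \<epsilon> * real (card V) \<le> real (card {y \<in> B i. (x, y) \<in> E})"
      using out_degree_le_rb_ball[of x v i] x i(2) unfolding B_def by linarith
  qed (use B_V finite_vertices center in \<open>auto intro: finite_subset\<close>)
  then show ?thesis
    unfolding \<delta>_def using B_V B_radius center by (intro exI[of _ "B i"] conjI) auto
qed

end
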